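(* Assume $\mathscr{R}_0>\frac{\sigma_m(\mu+r)C_I}{\mu\beta}$ (equivalently $C_I<\frac{\beta A}{(\mu+r)(\mu+\beta+\rho)}$) and $$\frac{\mu^2}{\mu+r}\left(\sqrt{\frac{\beta}{\mu\sigma_m}+\frac{1}{\sigma_s}}-\sqrt{\frac{1}{\sigma_s}}\right)^2<C_I<\frac{\beta^2\sigma_s}{(\mu+r)\sigma_m^2}.$$ Then, with $K=1+\frac{\sigma_m(\mu+r)}{\mu\beta}C_I$: $E^*$ is the unique endemic equilibrium of (3) if $1<\mathscr{R}_0<(\sqrt p+\sqrt q)^2$; all of $E^*,E_1^*,E_2^*$ are endemic equilibria if $(\sqrt p+\sqrt q)^2\le\mathscr{R}_0<K$; $E^*$ and $E_1^*$ are endemic equilibria but $E_2^*$ is not if $\mathscr{R}_0=K$; $E_1^*$ is the unique endemic equilibrium if $\mathscr{R}_0>K$.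
   Context: Let $A,\sigma_m,\sigma_s,\mu,\rho,\beta,r,C_I$ be positive constants. Write $[x]^+=\max\{0,x\}$ and $T(I_s)=rI_s$ if $I_s<C_I$, $T(I_s)=rC_I$ if $I_s\ge C_I$. System (3) is $$S'=A-\sigma_mSI_m-\sigma_sS[I_s-C_I]^+-\mu S,\quad I_m'=\sigma_mSI_m+\sigma_sS[I_s-C_I]^+-(\mu+\rho+\beta)I_m,\quad I_s'=\beta I_m-T(I_s)-\mu I_s.$$ $\mathscr{R}_0=\frac{A\sigma_m}{\mu(\mu+\beta+\rho)}$. An endemic equilibrium is an equilibrium of (3) with $S,I_m,I_s>0$. $E^*=(S^*,I_m^*,I_s^* )$ with $S^*=\frac{\mu+\beta+\rho}{\sigma_m}$, $I_m^*=\frac{\mu(\mathscr{R}_0-1)}{\sigma_m}$, $I_s^*=\frac{\mu\beta(\mathscr{R}_0-1)}{\sigma_m(\mu+r)}$. Let $p=\frac{(\mu+r)\sigma_m\sigma_sC_I}{\mu(\mu\sigma_m+\beta\sigma_s)}$, $q=\frac{\mu\sigma_m}{\mu\sigma_m+\beta\sigma_s}$, and $S_{1,2}^*=\frac{\mu+\beta+\rho}{2\sigma_m}\big\{\mathscr{R}_0-p+q\mp\sqrt{(\mathscr{R}_0-p-q)^2-4pq}\big\}$ (minus sign for $S_1^*$, plus for $S_2^*$), $I_{m_i}^*=\frac{\mu\mathscr{R}_0}{\sigma_m}-\frac{\mu S_i^*}{\mu+\beta+\rho}$, $I_{s_i}^*=\frac{\beta\mathscr{R}_0}{\sigma_m}-\frac{\beta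 S_i^*}{\mu+\beta+\rho}-\frac{rC_I}{\mu}$, $E_i^*=(S_i^*,I_{m_i}^*,I_{s_i}^* )$, $i=1,2$. "$E_i^*$ exists" / "$E_i^*$ is an endemic equilibrium" means $S_i^*$ is real, $S_i^*>0$, $I_{m_i}^*>0$ and $I_{s_i}^*>C_I$; "$E^*$ exists" means $E^*$ is an endemic equilibrium. *)

theory Defs
  imports Complex_Main
begin

definition pos_part :: "real \<Rightarrow> real" where
  "pos_part x = max 0 x"

definition Tfun :: "real \<Rightarrow> real \<Rightarrow> real \<Rightarrow> real" where
  "Tfun r CI Isv = (if Isv < CI then r * Isv else r * CI)"

definition is_equilibrium ::
  "real \<Rightarrow> real \<Rightarrow> real \<Rightarrow> real \<Rightarrow> real \<Rightarrow> real \<Rightarrow> real \<Rightarrow> real \<Rightarrow> real \<Rightarrow> real \<Rightarrow> real \<Rightarrow> bool" where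
  "is_equilibrium A sm ss mu rho beta r CI S Imv Isv \<longleftrightarrow>
     A - sm * S * Imv - ss * S * pos_part (Isv - CI) - mu * S = 0 \<and>
     sm * S * Imv + ss * S * pos_part (Isv - CI) - (mu + rho + beta) * Imv = 0 \<and>
     beta * Imv - Tfun r CI Isv - mu * Isv = 0"

definition endemic_equilibrium ::
  "real \<Rightarrow> real \<Rightarrow> real \<Rightarrow> real \<Rightarrow> real \<Rightarrow> real \<Rightarrow> real \<Rightarrow> real \<Rightarrow> real \<Rightarrow> real \<Rightarrow> real \<Rightarrow> bool" where
  "endemic_equilibrium A sm ss mu rho beta r CI S Imv Isv \<longleftrightarrow>
     is_equilibrium A sm ss mu rho beta r CI S Imv Isv \<and> S > 0 \<and> Imv > 0 \<and> Isv > 0"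

text \<open>"E_i^* exists" in the sense of the paper: S_i^* real (discriminant D \<ge> 0),
  S_i^* > 0, I_{m_i}^* > 0, I_{s_i}^* > C_I.\<close>
definition branch_exists :: "real \<Rightarrow> real \<Rightarrow> real \<Rightarrow> real \<Rightarrow> real \<Rightarrow> bool" where
  "branch_exists D CI S Imv Isv \<longleftrightarrow> D \<ge> 0 \<and> S > 0 \<and> Imv > 0 \<and> Isv > CI"

end

theory Submission
  imports Defs
begin

text \<open>Measure the susceptibles in units of \<open>S\<^sup>* = (\<mu> + \<beta> + \<rho>) / \<sigma>\<^sub>m\<close> and write
  \<open>K = 1 + k\<close>. An endemic equilibrium with \<open>I\<^sub>s \<le> C\<^sub>I\<close> is \<open>E\<^sup>*\<close>, which is admissible exactly
  when \<open>1 < R\<^sub>0 \<le> K\<close>; one with \<open>I\<^sub>s > C\<^sub>I\<close> is given by a root \<open>u < R\<^sub>0 - k\<close> of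
  \<open>f u = u\<^sup>2 - (R\<^sub>0 - p + q) u + q R\<^sub>0\<close>, with \<open>u = R\<^sub>0 - k\<close> corresponding to \<open>I\<^sub>s = C\<^sub>I\<close>.
  Since \<open>p = k (1 - q)\<close>, one has \<open>f (R\<^sub>0 - k) = q k (K - R\<^sub>0)\<close>, so the sign of \<open>K - R\<^sub>0\<close>
  and the position of the vertex of \<open>f\<close> decide how many roots lie below \<open>R\<^sub>0 - k\<close>.
  The two bounds on \<open>C\<^sub>I\<close> amount to \<open>(1 - \<surd>q)\<^sup>2 < p\<close> and \<open>q (1 + k) < 1\<close>: the first puts
  the threshold \<open>(\<surd>p + \<surd>q)\<^sup>2 \<le> K\<close> for two real positive roots above 1, the second puts the
  vertex of \<open>f\<close> below \<open>R\<^sub>0 - k\<close> once \<open>R\<^sub>0\<close> exceeds that threshold.\<close>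

lemma monic_quadratic_discrim_eq_square:
  fixes s P u :: real
  assumes "u^2 - s*u + P = 0"
  shows "s^2 - 4*P = (2*u - s)^2"
  using assms by (simp add: power2_eq_square algebra_simps)

lemma monic_quadratic_root_cases:
  fixes s P u :: real
  assumes "u^2 - s*u + P = 0"
  shows "u = (s - sqrt (s^2 - 4*P)) / 2 \<or> u = (s + sqrt (s^2 - 4*P)) / 2"
proof -
  have "sqrt (s^2 - 4*P) = \<bar>2*u - s\<bar>"
    using monic_quadratic_discrim_eq_square[OF assms] by simp
  then show ?thesis by (auto simp: abs_if)
qed

lemma monic_quadratic_roots_below:
  fixes s P w :: real
  assumes "0 < w^2 - s*w + P" and "s \<le> 2*w"
  shows "(s + sqrt (s^2 - 4*P)) / 2 < w"
proof -
  have "s^2 - 4*P < (2*w - s)^2"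
    using assms(1) by (simp add: power2_eq_square algebra_simps)
  then have "sqrt (s^2 - 4*P) < \<bar>2*w - s\<bar>"
    by (metis real_sqrt_abs real_sqrt_less_mono)
  then show ?thesis using assms(2) by simp
qed

lemma monic_quadratic_roots_around:
  fixes s P w :: real
  assumes "w^2 - s*w + P < 0"
  shows "0 < s^2 - 4*P" "(s - sqrt (s^2 - 4*P)) / 2 < w" "w < (s + sqrt (s^2 - 4*P)) / 2"
proof -
  have lt: "(2*w - s)^2 < s^2 - 4*P"
    using assms by (simp add: power2_eq_square algebra_simps)
  then show "0 < s^2 - 4*P"
    by (meson le_less_trans zero_le_power2)
  from lt have "\<bar>2*w - s\<bar> < sqrt (s^2 - 4*P)"
    by (metis real_sqrt_abs real_sqrt_less_mono)
  then show "(s - sqrt (s^2 - 4*P)) / 2 < w" "w < (s + sqrt (s^2 - 4*P)) / 2"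
    by (auto simp: abs_less_iff)
qed

lemma monic_quadratic_larger_root:
  fixes s P w :: real
  assumes "w^2 - s*w + P = 0" and "s \<le> 2*w"
  shows "(s + sqrt (s^2 - 4*P)) / 2 = w" "(s - sqrt (s^2 - 4*P)) / 2 = s - w"
proof -
  have "sqrt (s^2 - 4*P) = 2*w - s"
    using monic_quadratic_discrim_eq_square[OF assms(1)] assms(2) by simp
  then show "(s + sqrt (s^2 - 4*P)) / 2 = w" "(s - sqrt (s^2 - 4*P)) / 2 = s - w"
    by simp_all
qed

lemma monic_quadratic_smaller_root_pos:
  fixes s P :: real
  assumes "0 < P" and "0 < s"
  shows "0 < (s - sqrt (s^2 - 4*P)) / 2"
proof -
  have "sqrt (s^2 - 4*P) < sqrt (s^2)"
    using assms(1) by (intro real_sqrt_less_mono) simp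
  then show ?thesis using assms(2) by simp
qed

lemma monic_quadratic_vertex_below:
  fixes s P u w :: real
  assumes "u^2 - s*u + P = 0" and "u < w" and "0 < w^2 - s*w + P"
  shows "s < 2*w"
proof -
  have "w^2 - s*w + P = (w - u) * (w + u - s)"
    using assms(1) by (simp add: power2_eq_square algebra_simps)
  then have "0 < w + u - s"
    using assms(2,3) by (simp add: zero_less_mult_iff)
  then show ?thesis using assms(2) by linarith
qed

lemma sqrt_sum_square:
  fixes p q :: real
  assumes "0 \<le> p" and "0 \<le> q"
  shows "(sqrt p + sqrt q)^2 = p + q + 2 * sqrt (p*q)"
  using assms by (simp add: power2_eq_square algebra_simps real_sqrt_mult)

lemma sqrt_sum_square_le_iff:
  fixes p q R :: real
  assumes "0 \<le> p" and "0 \<le> q"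
  shows "(sqrt p + sqrt q)^2 \<le> R \<longleftrightarrow> 0 \<le> R - p - q \<and> 4*p*q \<le> (R - p - q)^2"
proof -
  have "2 * sqrt (p*q) = sqrt (4*p*q)"
    by (simp add: real_sqrt_mult)
  moreover have "sqrt (4*p*q) \<le> x \<longleftrightarrow> 0 \<le> x \<and> 4*p*q \<le> x^2" for x
    using assms by (metis mult_nonneg_nonneg real_sqrt_ge_zero real_sqrt_le_iff
        order_trans real_sqrt_unique zero_le_numeral le_less)
  ultimately show ?thesis using sqrt_sum_square[OF assms] by (smt (verit))
qed

lemma sqrt_sum_square_le_one_plus:
  fixes p q k :: real
  assumes "0 \<le> k" "0 \<le> q" "q \<le> 1" and "p = k*(1-q)"
  shows "(sqrt p + sqrt q)^2 \<le> 1 + k"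
proof -
  have "p*q = (1-q) * (k*q)"
    unfolding assms(4) by (simp add: algebra_simps)
  moreover have "0 \<le> p"
    using assms by simp
  ultimately have "(sqrt p + sqrt q)^2 = p + q + 2 * sqrt ((1-q) * (k*q))"
    using sqrt_sum_square assms(2) by metis
  moreover have "2 * sqrt ((1-q) * (k*q)) \<le> (1-q) + k*q"
    using arith_geo_mean_sqrt[of "1-q" "k*q"] assms by simp
  moreover have "p = k - k*q"
    using assms(4) by (simp add: algebra_simps)
  ultimately show ?thesis by linarith
qed

lemma one_less_sqrt_sum_square:
  fixes p q :: real
  assumes "(1 - sqrt q)^2 < p"
  shows "1 < (sqrt p + sqrt q)^2"
proof -
  have "\<bar>1 - sqrt q\<bar> < sqrt p"
    using assms by (metis real_sqrt_abs real_sqrt_less_mono)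
  then have "1 < sqrt p + sqrt q" by linarith
  then show ?thesis
    by (metis one_less_power zero_less_numeral)
qed

lemma vertex_bound_less_sqrt_sum_square:
  fixes p q k :: real
  assumes "0 < k" "0 < q" and "p = k*(1-q)" and "q*(k+1) < 1"
  shows "k*(1+q) + q < (sqrt p + sqrt q)^2"
proof -
  have "(k*q) * (k*q) < (k*q) * (1-q)"
    using assms by (intro mult_strict_left_mono) (auto simp: algebra_simps)
  then have "(k*q)^2 < p*q"
    unfolding assms(3) by (simp add: power2_eq_square algebra_simps)
  then have "k*q < sqrt (p*q)"
    using assms(1,2) by (metis real_sqrt_less_mono abs_of_pos mult_pos_pos real_sqrt_abs)
  moreover have "q < 1"
    using assms(4) mult_pos_pos[OF assms(2,1)] by (simp add: algebra_simps)
  then have "(sqrt p + sqrt q)^2 = p + q + 2 * sqrt (p*q)"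
    using assms by (intro sqrt_sum_square) auto
  moreover have "p = k - k*q"
    using assms(3) by (simp add: algebra_simps)
  moreover have "k*(1+q) + q = k + k*q + q"
    by (simp add: algebra_simps)
  ultimately show ?thesis by linarith
qed


locale treatment_model =
  fixes A sm ss mu rho beta r CI :: real
  assumes pos: "A > 0" "sm > 0" "ss > 0" "mu > 0" "rho > 0" "beta > 0" "r > 0" "CI > 0"
begin

abbreviation endemic :: "real \<Rightarrow> real \<Rightarrow> real \<Rightarrow> bool" where
  "endemic \<equiv> endemic_equilibrium A sm ss mu rho beta r CI"

definition R0 :: real where
  "R0 = A * sm / (mu * (mu + beta + rho))"

definition k :: real where
  "k = sm * (mu + r) * CI / (mu * beta)"

definition q :: real where
  "q = mu * sm / (mu * sm + beta * ss)"

definition p :: real where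
  "p = (mu + r) * sm * ss * CI / (mu * (mu * sm + beta * ss))"

definition discr :: real where
  "discr = (R0 - p - q)^2 - 4 * p * q"

definition S_star :: real where
  "S_star = (mu + beta + rho) / sm"

definition Im_star :: real where
  "Im_star = mu * (R0 - 1) / sm"

definition Is_star :: real where
  "Is_star = mu * beta * (R0 - 1) / (sm * (mu + r))"

text \<open>An equilibrium with \<open>Is > CI\<close> is determined by \<open>u = S / S_star\<close>; the paper's
  \<open>E\<^sub>i\<^sup>*\<close> is the branch point at the root \<open>u\<^sub>i\<close> of
  \<open>u\<^sup>2 - (R0 - p + q) u + q R0\<close>.\<close>

definition S_branch :: "real \<Rightarrow> real" where
  "S_branch u = (mu + beta + rho) / sm * u"

definition Im_branch :: "real \<Rightarrow> real" where
  "Im_branch u = mu * R0 / sm - mu * S_branch u / (mu + beta + rho)"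

definition Is_branch :: "real \<Rightarrow> real" where
  "Is_branch u = beta * R0 / sm - beta * S_branch u / (mu + beta + rho) - r * CI / mu"

definition u1 :: real where
  "u1 = (R0 - p + q - sqrt discr) / 2"

definition u2 :: real where
  "u2 = (R0 - p + q + sqrt discr) / 2"

abbreviation branch_point_exists :: "real \<Rightarrow> bool" where
  "branch_point_exists u \<equiv> branch_exists discr CI (S_branch u) (Im_branch u) (Is_branch u)"

lemma mu_beta_rho_pos: "0 < mu + beta + rho"
  using pos by simp

lemma k_pos: "0 < k"
  using pos by (simp add: k_def)

lemma q_pos: "0 < q"
  using pos by (simp add: q_def add_pos_pos)

lemma q_less_one: "q < 1"
  using pos by (simp add: q_def add_pos_pos)

lemma p_eq: "p = k * (1 - q)"
proof -
  have "0 < mu * sm + beta * ss"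
    using pos by (simp add: add_pos_pos)
  then have "1 - q = beta * ss / (mu * sm + beta * ss)"
    by (simp add: q_def field_simps)
  then have "k * (1 - q) = sm * (mu + r) * CI / (mu * beta) * (beta * ss / (mu * sm + beta * ss))"
    by (simp add: k_def)
  also have "\<dots> = p"
    using pos by (simp add: p_def)
  finally show ?thesis ..
qed

lemma p_nonneg: "0 \<le> p"
  using k_pos q_less_one by (simp add: p_eq)

lemma discr_eq: "discr = (R0 - p + q)^2 - 4 * (q * R0)"
  by (simp add: discr_def power2_eq_square algebra_simps)

lemma branch_poly_at_capacity:
  "(R0 - k)^2 - (R0 - p + q) * (R0 - k) + q * R0 = q * k * (1 + k - R0)"
  by (simp add: p_eq power2_eq_square algebra_simps)

lemma S_branch_div: "x * S_branch u / (mu + beta + rho) = x * u / sm"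
  using mu_beta_rho_pos by (simp add: S_branch_def)

lemma Im_branch_eq: "Im_branch u = mu / sm * (R0 - u)"
  by (simp add: Im_branch_def S_branch_div right_diff_distrib)

lemma Is_branch_minus_CI: "Is_branch u - CI = beta / sm * (R0 - u - k)"
proof -
  have "beta / sm * k = r * CI / mu + CI"
    using pos by (simp add: k_def field_simps)
  then show ?thesis
    unfolding Is_branch_def S_branch_div by (simp add: algebra_simps diff_divide_distrib)
qed

lemma Is_branch_eq: "Is_branch u = (beta * Im_branch u - r * CI) / mu"
  using pos by (simp add: Is_branch_def Im_branch_def field_simps)

lemma CI_less_Is_branch_iff: "CI < Is_branch u \<longleftrightarrow> u < R0 - k"
proof -
  have "CI < Is_branch u \<longleftrightarrow> 0 < beta / sm * (R0 - u - k)"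
    unfolding Is_branch_minus_CI[symmetric] by simp
  then show ?thesis
    using pos by (simp add: zero_less_divide_iff zero_less_mult_iff) arith
qed

lemma branch_exists_iff:
  "branch_exists D CI (S_branch u) (Im_branch u) (Is_branch u) \<longleftrightarrow> 0 \<le> D \<and> 0 < u \<and> u < R0 - k"
proof -
  have "0 < S_branch u \<longleftrightarrow> 0 < u"
    using pos mu_beta_rho_pos by (simp add: S_branch_def zero_less_divide_iff zero_less_mult_iff)
  moreover have "0 < Im_branch u \<longleftrightarrow> u < R0"
    using pos by (simp add: Im_branch_eq zero_less_divide_iff zero_less_mult_iff)
  moreover note CI_less_Is_branch_iff[of u]
  ultimately show ?thesis
    using k_pos by (auto simp: branch_exists_def)
qed

lemma A_sm_eq: "A * sm = mu * (mu + beta + rho) * R0"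
  using pos mu_beta_rho_pos by (simp add: R0_def)

lemma sm_S_star: "sm * S_star = mu + beta + rho"
  using pos by (simp add: S_star_def)

lemma E_star_balance:
  "A - (mu + beta + rho) * Im_star - mu * S_star = 0"
  "beta * Im_star - r * Is_star - mu * Is_star = 0"
proof -
  have "(A - (mu + beta + rho) * Im_star - mu * S_star) * sm = A * sm - mu * (mu + beta + rho) * R0"
    using pos by (simp add: S_star_def Im_star_def field_simps)
  then show "A - (mu + beta + rho) * Im_star - mu * S_star = 0"
    using pos by (simp add: A_sm_eq)
  have "(mu + r) * Is_star = beta * Im_star"
    using pos by (simp add: Im_star_def Is_star_def)
  then show "beta * Im_star - r * Is_star - mu * Is_star = 0"
    by (simp add: algebra_simps)
qed

lemma Is_star_le_CI_iff: "Is_star \<le> CI \<longleftrightarrow> R0 \<le> 1 + k"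
proof -
  have "mu * beta / (sm * (mu + r)) * k = CI"
    using pos by (simp add: k_def)
  then have "Is_star - CI = mu * beta / (sm * (mu + r)) * (R0 - 1 - k)"
    by (simp add: Is_star_def right_diff_distrib diff_divide_distrib)
  moreover have "0 < mu * beta / (sm * (mu + r))"
    using pos by simp
  ultimately show ?thesis
    by (smt (verit) mult_pos_pos mult_nonneg_nonpos)
qed

lemma endemic_E_star:
  assumes "1 < R0" and "R0 \<le> 1 + k"
  shows "endemic S_star Im_star Is_star"
proof -
  have "Is_star \<le> CI"
    using assms(2) Is_star_le_CI_iff by simp
  then have "pos_part (Is_star - CI) = 0" "Tfun r CI Is_star = r * Is_star"
    by (auto simp: pos_part_def Tfun_def)
  moreover have "0 < S_star" "0 < Im_star" "0 < Is_star"
    using pos assms(1) by (auto simp: Im_star_def Is_star_def S_star_def add_pos_pos)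
  ultimately show ?thesis
    using E_star_balance by (simp add: endemic_equilibrium_def is_equilibrium_def sm_S_star algebra_simps)
qed

lemma endemic_below_capacity:
  assumes "endemic S Imv Isv" and "Isv \<le> CI"
  shows "(S, Imv, Isv) = (S_star, Im_star, Is_star) \<and> R0 \<le> 1 + k"
proof -
  have "pos_part (Isv - CI) = 0" "Tfun r CI Isv = r * Isv"
    using assms(2) by (auto simp: pos_part_def Tfun_def)
  then have eq1: "A - sm * S * Imv - mu * S = 0"
    and eq2: "(sm * S - (mu + beta + rho)) * Imv = 0"
    and eq3: "beta * Imv - r * Isv - mu * Isv = 0" and "0 < Imv"
    using assms(1) by (auto simp: endemic_equilibrium_def is_equilibrium_def algebra_simps)
  then have "sm * S = sm * S_star"
    using sm_S_star by simp
  then have S: "S = S_star"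
    using pos by simp
  then have "(mu + beta + rho) * Imv = (mu + beta + rho) * Im_star"
    using eq1 E_star_balance(1) \<open>sm * S = sm * S_star\<close> sm_S_star by (simp add: algebra_simps)
  then have Im: "Imv = Im_star"
    using mu_beta_rho_pos by simp
  then have "(mu + r) * Isv = (mu + r) * Is_star"
    using eq3 E_star_balance(2) by (simp add: algebra_simps)
  then have "Isv = Is_star"
    using pos by simp
  then show ?thesis
    using S Im assms(2) Is_star_le_CI_iff by simp
qed

lemma branch_second_equation:
  "sm^2 * (sm * S_branch u * Im_branch u + ss * S_branch u * (Is_branch u - CI)
      - (mu + rho + beta) * Im_branch u)
     = - (mu * sm + beta * ss) * (mu + beta + rho) * (u^2 - (R0 - p + q) * u + q * R0)"
proof -
  define N where "N = mu * sm + beta * ss"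
  have "0 < N"
    using pos by (simp add: N_def add_pos_pos)
  then have mu_sm: "mu * sm = q * N" and beta_ss: "beta * ss = (1 - q) * N"
    by (simp_all add: q_def N_def field_simps)
  have "sm^2 * (sm * S_branch u * Im_branch u + ss * S_branch u * (Is_branch u - CI)
      - (mu + rho + beta) * Im_branch u)
      = (mu + beta + rho) * (mu * sm * (u * (R0 - u) - (R0 - u)) + beta * ss * (u * (R0 - u - k)))"
    using pos(2) unfolding S_branch_def Im_branch_eq Is_branch_minus_CI by (simp add: power2_eq_square field_simps)
  also have "\<dots> = (mu + beta + rho) * (q * N * (u * (R0 - u) - (R0 - u)) + (1 - q) * N * (u * (R0 - u - k)))"
    by (simp only: mu_sm beta_ss)
  also have "\<dots> = - N * (mu + beta + rho) * (u^2 - (R0 - p + q) * u + q * R0)"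
    by (simp add: p_eq power2_eq_square algebra_simps)
  finally show ?thesis
    by (simp add: N_def)
qed

lemma endemic_above_capacity:
  assumes "endemic S Imv Isv" and "CI < Isv"
  obtains u where "u^2 - (R0 - p + q) * u + q * R0 = 0" and "u < R0 - k"
    and "S = S_branch u" and "Imv = Im_branch u" and "Isv = Is_branch u"
proof -
  define u where "u = sm * S / (mu + beta + rho)"
  have S: "S = S_branch u"
    using pos mu_beta_rho_pos by (simp add: u_def S_branch_def)
  have "pos_part (Isv - CI) = Isv - CI" "Tfun r CI Isv = r * CI"
    using assms(2) by (auto simp: pos_part_def Tfun_def)
  then have eq1: "A - sm * S * Imv - ss * S * (Isv - CI) - mu * S = 0"
    and eq2: "sm * S * Imv + ss * S * (Isv - CI) - (mu + rho + beta) * Imv = 0"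
    and eq3: "beta * Imv - r * CI - mu * Isv = 0"
    using assms(1) by (auto simp: endemic_equilibrium_def is_equilibrium_def)
  have "(mu + beta + rho) * Im_branch u = mu * (mu + beta + rho) * R0 / sm - mu * S"
    using mu_beta_rho_pos by (simp add: Im_branch_def S[symmetric] right_diff_distrib)
  also have "\<dots> = A - mu * S"
    using pos by (simp flip: A_sm_eq)
  also have "\<dots> = (mu + beta + rho) * Imv"
    using eq1 eq2 by (simp add: algebra_simps)
  finally have "(mu + beta + rho) * Imv = (mu + beta + rho) * Im_branch u" ..
  then have Im: "Imv = Im_branch u"
    using mu_beta_rho_pos by simp
  have Is: "Isv = Is_branch u"
    using eq3 pos unfolding Is_branch_eq Im[symmetric] by (simp add: field_simps)
  have "0 = - (mu * sm + beta * ss) * (mu + beta + rho) * (u^2 - (R0 - p + q) * u + q * R0)"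
    using branch_second_equation[of u] eq2 unfolding S Im Is by (simp only: mult_zero_right)
  moreover have "0 < mu * sm + beta * ss"
    using pos by (simp add: add_pos_pos)
  ultimately have "u^2 - (R0 - p + q) * u + q * R0 = 0"
    using mu_beta_rho_pos by auto
  moreover have "u < R0 - k"
    using assms(2) CI_less_Is_branch_iff unfolding Is by simp
  ultimately show ?thesis
    using that S Im Is by blast
qed

lemma u1_eq: "u1 = (R0 - p + q - sqrt ((R0 - p + q)^2 - 4 * (q * R0))) / 2"
  by (simp add: u1_def discr_eq)

lemma u2_eq: "u2 = (R0 - p + q + sqrt ((R0 - p + q)^2 - 4 * (q * R0))) / 2"
  by (simp add: u2_def discr_eq)

lemma sqrt_p_plus_sqrt_q_square_le: "(sqrt p + sqrt q)^2 \<le> 1 + k"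
  using k_pos q_pos q_less_one p_eq by (intro sqrt_sum_square_le_one_plus) auto

lemma sqrt_p_plus_sqrt_q_square_le_of_branch_root:
  assumes root: "u^2 - (R0 - p + q) * u + q * R0 = 0" and "u < R0 - k" and "R0 < 1 + k"
  shows "(sqrt p + sqrt q)^2 \<le> R0"
proof -
  have "0 < (R0 - k)^2 - (R0 - p + q) * (R0 - k) + q * R0"
    using assms(3) k_pos q_pos by (simp add: branch_poly_at_capacity)
  then have "R0 - p + q < 2 * (R0 - k)"
    using monic_quadratic_vertex_below[OF root \<open>u < R0 - k\<close>] by blast
  moreover have "0 < k * q"
    using k_pos q_pos by simp
  ultimately have "0 \<le> R0 - p - q"
    using p_eq by (simp add: algebra_simps)
  moreover have "0 \<le> discr"
    using monic_quadratic_discrim_eq_square[OF root] by (simp add: discr_eq)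
  then have "4 * p * q \<le> (R0 - p - q)^2"
    by (simp add: discr_def)
  ultimately show ?thesis
    using sqrt_sum_square_le_iff[OF p_nonneg less_imp_le[OF q_pos]] by blast
qed

lemma unique_endemic_E_star:
  assumes "1 < R0" and "R0 < (sqrt p + sqrt q)^2"
  shows "endemic S_star Im_star Is_star \<and>
    (\<forall>S Imv Isv. endemic S Imv Isv \<longrightarrow> (S, Imv, Isv) = (S_star, Im_star, Is_star))"
proof (intro conjI allI impI)
  have below: "R0 < 1 + k"
    using assms(2) sqrt_p_plus_sqrt_q_square_le by linarith
  then show "endemic S_star Im_star Is_star"
    using assms(1) endemic_E_star by simp
  fix S Imv Isv
  assume E: "endemic S Imv Isv"
  have "\<not> CI < Isv"
  proof
    assume "CI < Isv"
    then obtain u where "u^2 - (R0 - p + q) * u + q * R0 = 0" and "u < R0 - k"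
      using endemic_above_capacity[OF E] by blast
    then show False
      using sqrt_p_plus_sqrt_q_square_le_of_branch_root below assms(2) by fastforce
  qed
  then show "(S, Imv, Isv) = (S_star, Im_star, Is_star)"
    using endemic_below_capacity[OF E] by simp
qed

lemma unique_endemic_E1:
  assumes "1 + k < R0"
  shows "branch_point_exists u1 \<and>
    (\<forall>S Imv Isv. endemic S Imv Isv \<longrightarrow> (S, Imv, Isv) = (S_branch u1, Im_branch u1, Is_branch u1))"
proof (intro conjI allI impI)
  have "(R0 - k)^2 - (R0 - p + q) * (R0 - k) + q * R0 < 0"
    using assms k_pos q_pos by (simp add: branch_poly_at_capacity mult_pos_neg)
  note around = monic_quadratic_roots_around[OF this, folded u1_eq u2_eq discr_eq]
  have "0 < k * q"
    using k_pos q_pos by simp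
  then have "0 < R0 - p + q"
    using assms p_eq q_pos by (simp add: algebra_simps)
  then have "0 < u1"
    unfolding u1_eq using assms k_pos q_pos by (intro monic_quadratic_smaller_root_pos) auto
  then show "branch_point_exists u1"
    using around by (simp add: branch_exists_iff)
  fix S Imv Isv
  assume E: "endemic S Imv Isv"
  have "CI < Isv"
    using endemic_below_capacity[OF E] assms by force
  then obtain u where root: "u^2 - (R0 - p + q) * u + q * R0 = 0" and "u < R0 - k"
    and "(S, Imv, Isv) = (S_branch u, Im_branch u, Is_branch u)"
    using endemic_above_capacity[OF E] by blast
  moreover have "u = u1"
    using monic_quadratic_root_cases[OF root, folded u1_eq u2_eq] around(3) \<open>u < R0 - k\<close> by auto
  ultimately show "(S, Imv, Isv) = (S_branch u1, Im_branch u1, Is_branch u1)"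
    by simp
qed

end

locale treatment_model_bistable = treatment_model +
  assumes CI_lower: "mu^2 / (mu + r) * (sqrt (beta / (mu * sm) + 1 / ss) - sqrt (1 / ss))^2 < CI"
    and CI_upper: "CI < beta^2 * ss / ((mu + r) * sm^2)"
begin

lemma q_mult_one_plus_k_less_one: "q * (k + 1) < 1"
proof -
  have N: "0 < mu * sm + beta * ss"
    using pos by (simp add: add_pos_pos)
  have "CI * ((mu + r) * sm^2) < beta^2 * ss"
    using CI_upper pos by (simp add: pos_less_divide_eq)
  then have "CI * ((mu + r) * sm^2) / beta < beta^2 * ss / beta"
    using pos by (simp add: divide_strict_right_mono)
  moreover have "mu * sm * k = CI * ((mu + r) * sm^2) / beta"
    using pos by (simp add: k_def power2_eq_square)
  ultimately have "mu * sm * k < beta * ss"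
    using pos by (simp add: power2_eq_square)
  then have "mu * sm * (k + 1) < mu * sm + beta * ss"
    by (simp add: algebra_simps)
  then show ?thesis
    using N by (simp add: q_def)
qed

lemma one_minus_sqrt_q_square_less_p: "(1 - sqrt q)^2 < p"
proof -
  define N where "N = mu * sm + beta * ss"
  have N: "0 < N"
    using pos by (simp add: N_def add_pos_pos)
  have "beta / (mu * sm) + 1 / ss = (1 / ss) / q"
    using pos N by (simp add: q_def N_def field_simps)
  then have "sqrt (beta / (mu * sm) + 1 / ss) = sqrt (1 / ss) / sqrt q"
    by (simp only: real_sqrt_divide)
  then have "sqrt (beta / (mu * sm) + 1 / ss) - sqrt (1 / ss) = sqrt (1 / ss) * (1 - sqrt q) / sqrt q"
    using q_pos by (simp add: field_simps)
  then have square_eq: "(sqrt (beta / (mu * sm) + 1 / ss) - sqrt (1 / ss))^2 = (1 - sqrt q)^2 / (ss * q)"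
    using pos q_pos by (simp add: power_divide power_mult_distrib)
  have factor_eq: "mu^2 / (mu + r) / (ss * q) = CI / p"
  proof -
    have "q = mu * sm / N" and p: "p = (mu + r) * sm * ss * CI / (mu * N)"
      by (simp_all add: q_def p_def N_def)
    show ?thesis
      using pos N unfolding \<open>q = mu * sm / N\<close> p by (simp add: power2_eq_square divide_simps)
  qed
  have "(1 - sqrt q)^2 * (CI / p) = mu^2 / (mu + r) * ((1 - sqrt q)^2 / (ss * q))"
    by (simp add: factor_eq[symmetric])
  also have "\<dots> < CI"
    using CI_lower by (simp only: square_eq)
  finally have "(1 - sqrt q)^2 * (CI / p) < CI" .
  moreover have "0 < p"
    using pos N by (simp add: p_def N_def[symmetric])
  ultimately show ?thesis
    using pos by (simp add: field_simps)
qed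

lemma sqrt_p_plus_sqrt_q_square_bounds:
  "1 < (sqrt p + sqrt q)^2" "k * (1 + q) + q < (sqrt p + sqrt q)^2"
proof -
  show "1 < (sqrt p + sqrt q)^2"
    using one_minus_sqrt_q_square_less_p by (rule one_less_sqrt_sum_square)
  show "k * (1 + q) + q < (sqrt p + sqrt q)^2"
    using k_pos q_pos p_eq q_mult_one_plus_k_less_one by (rule vertex_bound_less_sqrt_sum_square)
qed

lemma three_endemic_equilibria:
  assumes "(sqrt p + sqrt q)^2 \<le> R0" and "R0 < 1 + k"
  shows "endemic S_star Im_star Is_star \<and> branch_point_exists u1 \<and> branch_point_exists u2"
proof -
  have "endemic S_star Im_star Is_star"
    using assms sqrt_p_plus_sqrt_q_square_bounds(1) endemic_E_star by simp
  moreover have "0 \<le> R0 - p - q" and "4 * p * q \<le> (R0 - p - q)^2"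
    using assms(1) sqrt_sum_square_le_iff[OF p_nonneg less_imp_le[OF q_pos]] by auto
  then have "0 \<le> discr" and "0 < R0 - p + q"
    using q_pos by (auto simp: discr_def)
  moreover have "0 < u1"
    unfolding u1_eq using \<open>0 < R0 - p + q\<close> assms q_pos sqrt_p_plus_sqrt_q_square_bounds(1)
    by (intro monic_quadratic_smaller_root_pos) auto
  moreover have "u2 < R0 - k"
  proof -
    have "0 < (R0 - k)^2 - (R0 - p + q) * (R0 - k) + q * R0"
      using assms(2) k_pos q_pos by (simp add: branch_poly_at_capacity)
    moreover have "R0 - p + q \<le> 2 * (R0 - k)"
      using assms(1) sqrt_p_plus_sqrt_q_square_bounds(2) p_eq by (simp add: algebra_simps)
    ultimately show ?thesis
      unfolding u2_eq by (rule monic_quadratic_roots_below)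
  qed
  moreover have "u1 \<le> u2"
    using \<open>0 \<le> discr\<close> by (simp add: u1_def u2_def)
  ultimately show ?thesis
    by (simp add: branch_exists_iff)
qed

lemma threshold_endemic_equilibria:
  assumes "R0 = 1 + k"
  shows "endemic S_star Im_star Is_star \<and> branch_point_exists u1 \<and> \<not> branch_point_exists u2"
proof -
  have root: "(R0 - k)^2 - (R0 - p + q) * (R0 - k) + q * R0 = 0"
    using branch_poly_at_capacity assms by simp
  have "p = k - k * q"
    using p_eq by (simp add: algebra_simps)
  then have s: "R0 - p + q = 1 + q * (k + 1)"
    using assms by (simp add: algebra_simps)
  then have "R0 - p + q \<le> 2 * (R0 - k)"
    using assms q_mult_one_plus_k_less_one by simp
  note roots = monic_quadratic_larger_root[OF root this, folded u1_eq u2_eq]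
  have "0 \<le> discr"
    using monic_quadratic_discrim_eq_square[OF root] by (simp add: discr_eq)
  moreover have "0 < u1" "u1 < R0 - k"
    using roots(2) s assms k_pos q_pos q_mult_one_plus_k_less_one by auto
  moreover have "endemic S_star Im_star Is_star"
    using assms k_pos endemic_E_star by simp
  ultimately show ?thesis
    using roots(1) by (simp add: branch_exists_iff)
qed

end

theorem theorem2p2:
  fixes A sm ss mu rho beta r CI :: real
    and R0 p q K D Sst Imst Isst S1 Im1 Is1 S2 Im2 Is2 :: real
  assumes pos: "A > 0" "sm > 0" "ss > 0" "mu > 0" "rho > 0" "beta > 0" "r > 0" "CI > 0"
    and R0_def: "R0 = A * sm / (mu * (mu + beta + rho))"
    and p_def: "p = (mu + r) * sm * ss * CI / (mu * (mu * sm + beta * ss))"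
    and q_def: "q = mu * sm / (mu * sm + beta * ss)"
    and K_def: "K = 1 + sm * (mu + r) / (mu * beta) * CI"
    and Sst_def: "Sst = (mu + beta + rho) / sm"
    and Imst_def: "Imst = mu * (R0 - 1) / sm"
    and Isst_def: "Isst = mu * beta * (R0 - 1) / (sm * (mu + r))"
    and D_def: "D = (R0 - p - q)^2 - 4 * p * q"
    and S1_def: "S1 = (mu + beta + rho) / (2 * sm) * (R0 - p + q - sqrt D)"
    and S2_def: "S2 = (mu + beta + rho) / (2 * sm) * (R0 - p + q + sqrt D)"
    and Im1_def: "Im1 = mu * R0 / sm - mu * S1 / (mu + beta + rho)"
    and Im2_def: "Im2 = mu * R0 / sm - mu * S2 / (mu + beta + rho)"
    and Is1_def: "Is1 = beta * R0 / sm - beta * S1 / (mu + beta + rho) - r * CI / mu"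
    and Is2_def: "Is2 = beta * R0 / sm - beta * S2 / (mu + beta + rho) - r * CI / mu"
    and hR0: "R0 > sm * (mu + r) * CI / (mu * beta)"
    and hC1: "mu^2 / (mu + r) * (sqrt (beta / (mu * sm) + 1 / ss) - sqrt (1 / ss))^2 < CI"
    and hC2: "CI < beta^2 * ss / ((mu + r) * sm^2)"
  shows
    "(1 < R0 \<and> R0 < (sqrt p + sqrt q)^2 \<longrightarrow>
        endemic_equilibrium A sm ss mu rho beta r CI Sst Imst Isst \<and>
        (\<forall>S Imv Isv. endemic_equilibrium A sm ss mu rho beta r CI S Imv Isv \<longrightarrow>
            (S, Imv, Isv) = (Sst, Imst, Isst))) \<and>
     ((sqrt p + sqrt q)^2 \<le> R0 \<and> R0 < K \<longrightarrow>
        endemic_equilibrium A sm ss mu rho beta r CI Sst Imst Isst \<and>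
        branch_exists D CI S1 Im1 Is1 \<and> branch_exists D CI S2 Im2 Is2) \<and>
     (R0 = K \<longrightarrow>
        endemic_equilibrium A sm ss mu rho beta r CI Sst Imst Isst \<and>
        branch_exists D CI S1 Im1 Is1 \<and> \<not> branch_exists D CI S2 Im2 Is2) \<and>
     (R0 > K \<longrightarrow>
        branch_exists D CI S1 Im1 Is1 \<and>
        (\<forall>S Imv Isv. endemic_equilibrium A sm ss mu rho beta r CI S Imv Isv \<longrightarrow>
            (S, Imv, Isv) = (S1, Im1, Is1)))"
proof -
  interpret M: treatment_model_bistable A sm ss mu rho beta r CI
    using pos hC1 hC2 by unfold_locales
  have R0: "R0 = M.R0" and p: "p = M.p" and q: "q = M.q" and K: "K = 1 + M.k"
    using R0_def p_def q_def K_def by (simp_all add: M.R0_def M.p_def M.q_def M.k_def)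
  have D: "D = M.discr"
    using D_def by (simp add: M.discr_def R0 p q)
  have star: "Sst = M.S_star" "Imst = M.Im_star" "Isst = M.Is_star"
    using Sst_def Imst_def Isst_def by (simp_all add: M.S_star_def M.Im_star_def M.Is_star_def R0)
  have S: "S1 = M.S_branch M.u1" "S2 = M.S_branch M.u2"
    using S1_def S2_def by (simp_all add: M.S_branch_def M.u1_def M.u2_def R0 p q D)
  have branch1: "Im1 = M.Im_branch M.u1" "Is1 = M.Is_branch M.u1"
    and branch2: "Im2 = M.Im_branch M.u2" "Is2 = M.Is_branch M.u2"
    using Im1_def Is1_def Im2_def Is2_def by (simp_all add: M.Im_branch_def M.Is_branch_def R0 S)
  show ?thesis
    unfolding R0 p q K D star S branch1 branch2
    using M.unique_endemic_E_star M.three_endemic_equilibria M.threshold_endemic_equilibria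
      M.unique_endemic_E1
    by simp
qed

end
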